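(* The Haar state $h$ of $\mathbb G_\theta=(A_\theta^n,\Delta)$ satisfies $$h(x_\sigma^{\vec r})=\frac{1}{n!}\,\delta_{\vec 0,\vec r}\qquad\text{for all }\sigma\in S_n,\ \vec r\in\mathbb Z^n.$$
   Context: Let $n\ge2$, $\theta\in M_n(\mathbb R)$ skew-symmetric. For a real skew-symmetric $\eta$, $C(\mathbb T^n_\eta)$ is the universal C*-algebra generated by unitaries $x_1,\dots,x_n$ with $x_ix_j=e^{2\pi i\eta_{ij}}x_jx_i$. For $\sigma\in S_n$, $\theta^{(\sigma)}_{ij}=\theta_{ji}+\theta_{\sigma^{-1}(i),\sigma^{-1}(j)}$; $A_\theta^n=\bigoplus_{\sigma\in S_n}C(\mathbb T^n_{\theta^{(\sigma)}})$; $x_{\sigma,i}$ is the $i$-th generator of the $\sigma$-th summand (extended by $0$); $u_{ik}=\sum_{\sigma:\sigma(k)=i}x_{\sigma,i}$; $\Delta$ is the unital *-homomorphism with $\Delta(u_{ik})=\sum_ju_{ij}\otimes u_{jk}$, making $(A_\theta^n,\Delta)$ a compact quantum group. For $\vec r=(r_1,\dots,r_n)\in\mathbb Z^n$, $x_\sigma^{\vec r}=x_{\sigma,1}^{r_1}\cdots x_{\sigma,n}^{r_n}$, computed in the $\sigma$-th summand, where negative powers mean powers of the adjoint and $x_{\sigma,i}^0$ is the unit $p_\sigma$ of the $\sigma$-th summand. The Haar state is the unique state $h$ on $A_\theta^n$ with $(\mathrm{id}\otimes h)\Delta=h(\cdot)1=(h\otimes\mathrm{id})\Delta$. *)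

theory Defs
  imports Complex_Main "HOL-Combinatorics.Permutations" "HOL-Library.Function_Algebras"
begin

text \<open>
Algebraic model of the dense *-subalgebra O(A) of
A_theta^n = (direct sum over sigma in S_n) C(T^n_{theta^(sigma)}).
Generators are indexed 0..n-1 (instead of 1..n).
A basis element is indexed by a key (sigma, r): sigma a permutation of {..<n},
r :: nat => int a vector with r i = 0 for i >= n; it stands for the normal-ordered
monomial x_{sigma,0}^{r 0} ... x_{sigma,n-1}^{r (n-1)} of the sigma-th summand.
An element of O(A) is a finitely supported coefficient function on valid keys.
The algebraic tensor product O(A) (x) O(A) is modelled by finitely supported
coefficient functions on pairs of valid keys.
\<close>

type_synonym qkey = "(nat \<Rightarrow> nat) \<times> (nat \<Rightarrow> int)"
type_synonym qel = "qkey \<Rightarrow> complex"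
type_synonym qel2 = "qkey \<times> qkey \<Rightarrow> complex"

definition valid_key :: "nat \<Rightarrow> qkey \<Rightarrow> bool" where
  "valid_key n k \<longleftrightarrow> fst k permutes {..<n} \<and> (\<forall>i\<ge>n. snd k i = 0)"

definition Alg :: "nat \<Rightarrow> qel set" where
  "Alg n = {f. finite {k. f k \<noteq> 0} \<and> (\<forall>k. f k \<noteq> 0 \<longrightarrow> valid_key n k)}"

definition Alg2 :: "nat \<Rightarrow> qel2 set" where
  "Alg2 n = {F. finite {p. F p \<noteq> 0} \<and>
     (\<forall>k l. F (k, l) \<noteq> 0 \<longrightarrow> valid_key n k \<and> valid_key n l)}"

definition theta_sig :: "(nat \<Rightarrow> nat \<Rightarrow> real) \<Rightarrow> (nat \<Rightarrow> nat) \<Rightarrow> nat \<Rightarrow> nat \<Rightarrow> real" where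
  "theta_sig \<theta> \<sigma> i j = \<theta> j i + \<theta> (inv \<sigma> i) (inv \<sigma> j)"

text \<open>Twist: with x_i x_j = e^{2 pi i eta_ij} x_j x_i, one has
  x^r x^s = tw r s * x^(r+s)  and  (x^r)^* = tw r r * x^(-r)
  for normal-ordered monomials, where tw r s = prod_{j<i} e^{2 pi i eta_ij r_i s_j}.\<close>
definition tw :: "nat \<Rightarrow> (nat \<Rightarrow> nat \<Rightarrow> real) \<Rightarrow> (nat \<Rightarrow> nat) \<Rightarrow> (nat \<Rightarrow> int) \<Rightarrow> (nat \<Rightarrow> int) \<Rightarrow> complex" where
  "tw n \<theta> \<sigma> r s = cis (2 * pi * (\<Sum>i<n. \<Sum>j<i. theta_sig \<theta> \<sigma> i j * of_int (r i) * of_int (s j)))"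

definition qmult :: "nat \<Rightarrow> (nat \<Rightarrow> nat \<Rightarrow> real) \<Rightarrow> qel \<Rightarrow> qel \<Rightarrow> qel" where
  "qmult n \<theta> f g = (\<lambda>(\<sigma>, t). \<Sum>r\<in>{r. f (\<sigma>, r) \<noteq> 0}.
      f (\<sigma>, r) * g (\<sigma>, t - r) * tw n \<theta> \<sigma> r (t - r))"

definition qstar :: "nat \<Rightarrow> (nat \<Rightarrow> nat \<Rightarrow> real) \<Rightarrow> qel \<Rightarrow> qel" where
  "qstar n \<theta> f = (\<lambda>(\<sigma>, t). cnj (f (\<sigma>, - t)) * tw n \<theta> \<sigma> t t)"

definition qone :: "nat \<Rightarrow> qel" where
  "qone n = (\<lambda>(\<sigma>, t). if \<sigma> permutes {..<n} \<and> t = (\<lambda>_. 0) then 1 else 0)"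

definition qscale :: "complex \<Rightarrow> qel \<Rightarrow> qel" where
  "qscale c f = (\<lambda>k. c * f k)"

definition qtensor :: "qel \<Rightarrow> qel \<Rightarrow> qel2" where
  "qtensor f g = (\<lambda>(k, l). f k * g l)"

definition qmult2 :: "nat \<Rightarrow> (nat \<Rightarrow> nat \<Rightarrow> real) \<Rightarrow> qel2 \<Rightarrow> qel2 \<Rightarrow> qel2" where
  "qmult2 n \<theta> F G = (\<lambda>((\<sigma>, t), (\<tau>, u)). \<Sum>(r, s)\<in>{(r, s). F ((\<sigma>, r), (\<tau>, s)) \<noteq> 0}.
      F ((\<sigma>, r), (\<tau>, s)) * G ((\<sigma>, t - r), (\<tau>, u - s))
        * tw n \<theta> \<sigma> r (t - r) * tw n \<theta> \<tau> s (u - s))"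

definition qstar2 :: "nat \<Rightarrow> (nat \<Rightarrow> nat \<Rightarrow> real) \<Rightarrow> qel2 \<Rightarrow> qel2" where
  "qstar2 n \<theta> F = (\<lambda>((\<sigma>, t), (\<tau>, u)).
      cnj (F ((\<sigma>, - t), (\<tau>, - u))) * tw n \<theta> \<sigma> t t * tw n \<theta> \<tau> u u)"

definition qone2 :: "nat \<Rightarrow> qel2" where
  "qone2 n = qtensor (qone n) (qone n)"

definition qscale2 :: "complex \<Rightarrow> qel2 \<Rightarrow> qel2" where
  "qscale2 c F = (\<lambda>p. c * F p)"

definition slice_right :: "(qel \<Rightarrow> complex) \<Rightarrow> qel2 \<Rightarrow> qel" where
  "slice_right h F = (\<lambda>k. h (\<lambda>l. F (k, l)))"

definition slice_left :: "(qel \<Rightarrow> complex) \<Rightarrow> qel2 \<Rightarrow> qel" where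
  "slice_left h F = (\<lambda>l. h (\<lambda>k. F (k, l)))"

definition psum :: "(nat \<Rightarrow> nat) \<Rightarrow> qel" where
  "psum \<sigma> = (\<lambda>k. if k = (\<sigma>, \<lambda>_. 0) then 1 else 0)"

definition gen :: "(nat \<Rightarrow> nat) \<Rightarrow> nat \<Rightarrow> qel" where
  "gen \<sigma> i = (\<lambda>k. if k = (\<sigma>, \<lambda>j. if j = i then 1 else 0) then 1 else 0)"

definition uent :: "nat \<Rightarrow> nat \<Rightarrow> nat \<Rightarrow> qel" where
  "uent n i k = (\<Sum>\<sigma>\<in>{\<sigma>. \<sigma> permutes {..<n} \<and> \<sigma> k = i}. gen \<sigma> i)"

definition gpow :: "nat \<Rightarrow> (nat \<Rightarrow> nat \<Rightarrow> real) \<Rightarrow> (nat \<Rightarrow> nat) \<Rightarrow> nat \<Rightarrow> int \<Rightarrow> qel" where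
  "gpow n \<theta> \<sigma> i k = (if 0 \<le> k then (qmult n \<theta> (gen \<sigma> i) ^^ nat k) (psum \<sigma>)
                      else (qmult n \<theta> (qstar n \<theta> (gen \<sigma> i)) ^^ nat (- k)) (psum \<sigma>))"

definition xpow :: "nat \<Rightarrow> (nat \<Rightarrow> nat \<Rightarrow> real) \<Rightarrow> (nat \<Rightarrow> nat) \<Rightarrow> (nat \<Rightarrow> int) \<Rightarrow> qel" where
  "xpow n \<theta> \<sigma> r = foldr (\<lambda>i acc. qmult n \<theta> (gpow n \<theta> \<sigma> i (r i)) acc) [0..<n] (psum \<sigma>)"

definition is_comult :: "nat \<Rightarrow> (nat \<Rightarrow> nat \<Rightarrow> real) \<Rightarrow> (qel \<Rightarrow> qel2) \<Rightarrow> bool" where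
  "is_comult n \<theta> \<Delta> \<longleftrightarrow>
     (\<forall>a\<in>Alg n. \<Delta> a \<in> Alg2 n) \<and>
     (\<forall>a\<in>Alg n. \<forall>b\<in>Alg n. \<Delta> (a + b) = \<Delta> a + \<Delta> b) \<and>
     (\<forall>a\<in>Alg n. \<forall>c. \<Delta> (qscale c a) = qscale2 c (\<Delta> a)) \<and>
     (\<forall>a\<in>Alg n. \<forall>b\<in>Alg n. \<Delta> (qmult n \<theta> a b) = qmult2 n \<theta> (\<Delta> a) (\<Delta> b)) \<and>
     (\<forall>a\<in>Alg n. \<Delta> (qstar n \<theta> a) = qstar2 n \<theta> (\<Delta> a)) \<and>
     \<Delta> (qone n) = qone2 n \<and>
     (\<forall>i<n. \<forall>k<n. \<Delta> (uent n i k) = (\<Sum>j<n. qtensor (uent n i j) (uent n j k)))"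

definition is_state :: "nat \<Rightarrow> (nat \<Rightarrow> nat \<Rightarrow> real) \<Rightarrow> (qel \<Rightarrow> complex) \<Rightarrow> bool" where
  "is_state n \<theta> h \<longleftrightarrow>
     (\<forall>a\<in>Alg n. \<forall>b\<in>Alg n. h (a + b) = h a + h b) \<and>
     (\<forall>a\<in>Alg n. \<forall>c. h (qscale c a) = c * h a) \<and>
     (\<forall>a\<in>Alg n. Im (h (qmult n \<theta> (qstar n \<theta> a) a)) = 0 \<and>
                  Re (h (qmult n \<theta> (qstar n \<theta> a) a)) \<ge> 0) \<and>
     h (qone n) = 1"

definition is_haar_state :: "nat \<Rightarrow> (nat \<Rightarrow> nat \<Rightarrow> real) \<Rightarrow> (qel \<Rightarrow> qel2) \<Rightarrow> (qel \<Rightarrow> complex) \<Rightarrow> bool" where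
  "is_haar_state n \<theta> \<Delta> h \<longleftrightarrow> is_state n \<theta> h \<and>
     (\<forall>a\<in>Alg n. slice_right h (\<Delta> a) = qscale (h a) (qone n) \<and>
                 slice_left h (\<Delta> a) = qscale (h a) (qone n))"

end

theory Submission
  imports Defs
begin

text \<open>
  The comultiplication is graded: each u_ik is homogeneous of degree e_i, so the left leg of
  \<Delta>(u_ik) = \<Sum>_j u_ij \<otimes> u_jk has degree e_i and the left leg of \<Delta>(x_\<sigma>^r) has degree r.
  Evaluating the invariance (id \<otimes> h)\<Delta> = h(-)1 at the coefficient of the unit p_\<rho> of a summand
  gives h(x_\<sigma>^r) = 0 for r \<noteq> 0. For r = 0, x_\<sigma>^0 = p_\<sigma> is the product over k of the
  projections u_\<sigma>(k)k^* u_\<sigma>(k)k = \<Sum>_{\<tau>(k) = \<sigma>(k)} p_\<tau>, whence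
  \<Delta>(p_\<sigma>) = \<Sum>_{\<rho>\<tau> = \<sigma>} p_\<rho> \<otimes> p_\<tau>. Invariance then makes h(p_\<sigma>) independent of \<sigma>,
  and \<Sum>_\<sigma> p_\<sigma> = 1 forces the common value 1/n!.
\<close>

lemma sum_apply: "(\<Sum>x\<in>A. f x) y = (\<Sum>x\<in>A. f x y)"
  by (induction A rule: infinite_finite_induct) auto

lemma permutes_lessThan_eqI:
  assumes "\<alpha> permutes {..<n}" "\<beta> permutes {..<n}" "\<forall>k<n. \<alpha> k = \<beta> k"
  shows "\<alpha> = \<beta>"
proof
  fix x show "\<alpha> x = \<beta> x"
    using assms by (cases "x < n") (auto simp: permutes_not_in)
qed

definition unit_vec :: "nat \<Rightarrow> nat \<Rightarrow> int" where
  "unit_vec i = (\<lambda>j. if j = i then 1 else 0)"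

lemma tw_eq_1:
  assumes "\<And>i j. j < i \<Longrightarrow> r i = 0 \<or> s j = 0"
  shows "tw n \<theta> \<sigma> r s = 1"
proof -
  have "(\<Sum>i<n. \<Sum>j<i. theta_sig \<theta> \<sigma> i j * of_int (r i) * of_int (s j)) = 0"
    using assms by (intro sum.neutral ballI) auto
  then show ?thesis by (simp add: tw_def)
qed

lemma tw_trivial [simp]:
  "tw n \<theta> \<sigma> 0 s = 1"
  "tw n \<theta> \<sigma> (unit_vec i) (unit_vec i) = 1"
  "tw n \<theta> \<sigma> (- unit_vec i) (unit_vec i) = 1"
  "tw n \<theta> \<sigma> (- unit_vec i) (- unit_vec i) = 1"
  by (rule tw_eq_1; auto simp: unit_vec_def)+

lemma qmult_nonzeroE:
  assumes "qmult n \<theta> f g (\<sigma>, t) \<noteq> 0"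
  obtains r where "f (\<sigma>, r) \<noteq> 0" "g (\<sigma>, t - r) \<noteq> 0"
proof -
  from assms have "(\<Sum>r\<in>{r. f (\<sigma>, r) \<noteq> 0}. f (\<sigma>, r) * g (\<sigma>, t - r) * tw n \<theta> \<sigma> r (t - r)) \<noteq> 0"
    by (simp add: qmult_def)
  then obtain r where "f (\<sigma>, r) * g (\<sigma>, t - r) * tw n \<theta> \<sigma> r (t - r) \<noteq> 0"
    by (meson sum.not_neutral_contains_not_neutral)
  then show thesis using that by simp blast
qed

lemma qmult2_nonzeroE:
  assumes "qmult2 n \<theta> F G ((\<sigma>, t), (\<tau>, u)) \<noteq> 0"
  obtains r s where "F ((\<sigma>, r), (\<tau>, s)) \<noteq> 0" "G ((\<sigma>, t - r), (\<tau>, u - s)) \<noteq> 0"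
proof -
  from assms have "(\<Sum>(r, s)\<in>{(r, s). F ((\<sigma>, r), (\<tau>, s)) \<noteq> 0}.
      F ((\<sigma>, r), (\<tau>, s)) * G ((\<sigma>, t - r), (\<tau>, u - s))
        * tw n \<theta> \<sigma> r (t - r) * tw n \<theta> \<tau> s (u - s)) \<noteq> 0"
    by (simp add: qmult2_def)
  then obtain p where p: "(\<lambda>(r, s). F ((\<sigma>, r), (\<tau>, s)) * G ((\<sigma>, t - r), (\<tau>, u - s))
        * tw n \<theta> \<sigma> r (t - r) * tw n \<theta> \<tau> s (u - s)) p \<noteq> 0"
    by (meson sum.not_neutral_contains_not_neutral)
  obtain r s where "p = (r, s)" by (cases p)
  with p show thesis using that[of r s] by simp
qed

lemma qmult_single_left:
  assumes "\<And>r. f (\<sigma>, r) \<noteq> 0 \<longleftrightarrow> C \<and> r = r0"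
  shows "qmult n \<theta> f g (\<sigma>, t) =
    (if C then f (\<sigma>, r0) * g (\<sigma>, t - r0) * tw n \<theta> \<sigma> r0 (t - r0) else 0)"
proof -
  have "{r. f (\<sigma>, r) \<noteq> 0} = (if C then {r0} else {})" using assms by auto
  then show ?thesis by (simp add: qmult_def)
qed

lemma qmult_degree0_left:
  assumes "\<And>r. f (\<sigma>, r) \<noteq> 0 \<Longrightarrow> r = 0"
  shows "qmult n \<theta> f g (\<sigma>, t) = f (\<sigma>, 0) * g (\<sigma>, t)"
proof -
  have "\<And>r. f (\<sigma>, r) \<noteq> 0 \<longleftrightarrow> f (\<sigma>, 0) \<noteq> 0 \<and> r = 0"
    using assms by blast
  from qmult_single_left[OF this, of n \<theta> g t] show ?thesis
    by (simp add: zero_fun_def[symmetric] split: if_splits)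
qed

lemma qmult2_single_left:
  assumes "\<And>r s. F ((\<sigma>, r), (\<tau>, s)) \<noteq> 0 \<longleftrightarrow> C \<and> r = r0 \<and> s = s0"
  shows "qmult2 n \<theta> F G ((\<sigma>, t), (\<tau>, u)) =
    (if C then F ((\<sigma>, r0), (\<tau>, s0)) * G ((\<sigma>, t - r0), (\<tau>, u - s0))
       * tw n \<theta> \<sigma> r0 (t - r0) * tw n \<theta> \<tau> s0 (u - s0) else 0)"
proof -
  have "{(r, s). F ((\<sigma>, r), (\<tau>, s)) \<noteq> 0} = (if C then {(r0, s0)} else {})"
    using assms by auto
  then show ?thesis by (simp add: qmult2_def)
qed

lemma qmult2_degree0_left:
  assumes "\<And>r s. F ((\<sigma>, r), (\<tau>, s)) \<noteq> 0 \<Longrightarrow> r = 0 \<and> s = 0"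
  shows "qmult2 n \<theta> F G ((\<sigma>, t), (\<tau>, u)) = F ((\<sigma>, 0), (\<tau>, 0)) * G ((\<sigma>, t), (\<tau>, u))"
proof -
  have "\<And>r s. F ((\<sigma>, r), (\<tau>, s)) \<noteq> 0 \<longleftrightarrow> F ((\<sigma>, 0), (\<tau>, 0)) \<noteq> 0 \<and> r = 0 \<and> s = 0"
    using assms by blast
  from qmult2_single_left[OF this, of n \<theta> G t u] show ?thesis
    by (simp add: zero_fun_def[symmetric] split: if_splits)
qed

lemma psum_apply: "psum \<sigma> (\<sigma>', t) = (if \<sigma>' = \<sigma> \<and> t = 0 then 1 else 0)"
  by (auto simp: psum_def zero_fun_def)

lemma gen_apply: "gen \<sigma> i (\<sigma>', t) = (if \<sigma>' = \<sigma> \<and> t = unit_vec i then 1 else 0)"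
  by (auto simp: gen_def unit_vec_def)

lemma qone_apply: "qone n (\<sigma>, t) = (if \<sigma> permutes {..<n} \<and> t = 0 then 1 else 0)"
  by (auto simp: qone_def zero_fun_def)

lemma qone_eq_sum_psum: "qone n = (\<Sum>\<sigma>\<in>{\<sigma>. \<sigma> permutes {..<n}}. psum \<sigma>)"
proof
  fix k :: qkey
  obtain \<sigma>' t where k: "k = (\<sigma>', t)" by (cases k)
  have "(\<Sum>\<sigma>\<in>{\<sigma>. \<sigma> permutes {..<n}}. psum \<sigma> (\<sigma>', t)) =
        (\<Sum>\<sigma>\<in>{\<sigma>. \<sigma> permutes {..<n}}. if \<sigma> = \<sigma>' then (if t = 0 then 1 else 0) else 0)"
    by (rule sum.cong) (auto simp: psum_apply)
  also have "\<dots> = qone n (\<sigma>', t)"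
    by (subst sum.delta) (auto simp: finite_permutations qone_apply)
  finally show "qone n k = (\<Sum>\<sigma>\<in>{\<sigma>. \<sigma> permutes {..<n}}. psum \<sigma>) k"
    by (simp add: k sum_apply)
qed

lemma uent_apply:
  "uent n i k (\<sigma>, t) = (if \<sigma> permutes {..<n} \<and> \<sigma> k = i \<and> t = unit_vec i then 1 else 0)"
proof -
  have "uent n i k (\<sigma>, t) = (\<Sum>\<tau>\<in>{\<tau>. \<tau> permutes {..<n} \<and> \<tau> k = i}.
          if \<tau> = \<sigma> then (if t = unit_vec i then 1 else 0) else 0)"
    unfolding uent_def sum_apply gen_apply by (rule sum.cong) auto
  also have "\<dots> = (if \<sigma> permutes {..<n} \<and> \<sigma> k = i \<and> t = unit_vec i then 1 else 0)"
    by (subst sum.delta) (auto intro: finite_subset[OF _ finite_permutations[of "{..<n}"]])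
  finally show ?thesis .
qed

lemma qstar_uent_apply:
  "qstar n \<theta> (uent n i k) (\<sigma>, t) =
    (if \<sigma> permutes {..<n} \<and> \<sigma> k = i \<and> t = - unit_vec i then 1 else 0)"
  by (auto simp: qstar_def uent_apply minus_equation_iff[of t])

lemma gen_eq_qmult_psum_uent:
  assumes "\<sigma> permutes {..<n}"
  shows "gen \<sigma> i = qmult n \<theta> (psum \<sigma>) (uent n i (inv \<sigma> i))"
proof
  fix k :: qkey
  obtain \<sigma>' t where k: "k = (\<sigma>', t)" by (cases k)
  show "gen \<sigma> i k = qmult n \<theta> (psum \<sigma>) (uent n i (inv \<sigma> i)) k"
    unfolding k by (subst qmult_degree0_left)
      (auto simp: psum_apply gen_apply uent_apply assms permutes_inverses[OF assms] split: if_splits)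
qed

definition uproj :: "nat \<Rightarrow> (nat \<Rightarrow> nat \<Rightarrow> real) \<Rightarrow> nat \<Rightarrow> nat \<Rightarrow> qel" where
  "uproj n \<theta> i k = qmult n \<theta> (qstar n \<theta> (uent n i k)) (uent n i k)"

lemma uproj_apply:
  "uproj n \<theta> i k (\<sigma>, t) = (if \<sigma> permutes {..<n} \<and> \<sigma> k = i \<and> t = 0 then 1 else 0)"
proof -
  have "\<And>r. qstar n \<theta> (uent n i k) (\<sigma>, r) \<noteq> 0 \<longleftrightarrow>
            (\<sigma> permutes {..<n} \<and> \<sigma> k = i) \<and> r = - unit_vec i"
    by (simp add: qstar_uent_apply)
  from qmult_single_left[OF this, of n \<theta> "uent n i k" t] show ?thesis
    by (auto simp: uproj_def qstar_uent_apply uent_apply)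
qed

lemma AlgI:
  assumes "finite {k. f k \<noteq> 0}" and "\<And>\<sigma> t. f (\<sigma>, t) \<noteq> 0 \<Longrightarrow> valid_key n (\<sigma>, t)"
  shows "f \<in> Alg n"
  using assms unfolding Alg_def by auto

lemma Alg_supportI:
  assumes "\<And>\<sigma> t. f (\<sigma>, t) \<noteq> 0 \<Longrightarrow> \<sigma> permutes {..<n} \<and> t \<in> T"
    and "finite T" and "\<And>t i. t \<in> T \<Longrightarrow> n \<le> i \<Longrightarrow> t i = 0"
  shows "f \<in> Alg n"
proof (rule AlgI)
  have "{k. f k \<noteq> 0} \<subseteq> {\<sigma>. \<sigma> permutes {..<n}} \<times> T"
    using assms(1) by force
  then show "finite {k. f k \<noteq> 0}"
    by (rule finite_subset) (simp add: assms(2) finite_permutations)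
qed (use assms in \<open>auto simp: valid_key_def\<close>)

lemma Alg_zero: "0 \<in> Alg n"
  by (simp add: Alg_def)

lemma Alg_add:
  assumes "f \<in> Alg n" "g \<in> Alg n"
  shows "f + g \<in> Alg n"
proof (rule AlgI)
  have "{k. (f + g) k \<noteq> 0} \<subseteq> {k. f k \<noteq> 0} \<union> {k. g k \<noteq> 0}" by auto
  then show "finite {k. (f + g) k \<noteq> 0}"
    by (rule finite_subset) (use assms in \<open>simp add: Alg_def\<close>)
next
  fix \<sigma> t assume "(f + g) (\<sigma>, t) \<noteq> 0"
  then have "f (\<sigma>, t) \<noteq> 0 \<or> g (\<sigma>, t) \<noteq> 0" by auto
  with assms show "valid_key n (\<sigma>, t)" by (auto simp: Alg_def)
qed

lemma Alg_sum: "finite A \<Longrightarrow> (\<And>x. x \<in> A \<Longrightarrow> f x \<in> Alg n) \<Longrightarrow> (\<Sum>x\<in>A. f x) \<in> Alg n"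
  by (induction A rule: finite_induct) (simp_all add: Alg_zero Alg_add)

lemma Alg_qstar:
  assumes "f \<in> Alg n"
  shows "qstar n \<theta> f \<in> Alg n"
proof (rule AlgI)
  have "{k. qstar n \<theta> f k \<noteq> 0} \<subseteq> (\<lambda>(\<sigma>, t). (\<sigma>, - t)) ` {k. f k \<noteq> 0}"
    by (force simp: qstar_def intro: image_eqI[where x = "(fst k, - snd k)" for k])
  then show "finite {k. qstar n \<theta> f k \<noteq> 0}"
    by (rule finite_subset) (use assms in \<open>simp add: Alg_def\<close>)
next
  fix \<sigma> t assume "qstar n \<theta> f (\<sigma>, t) \<noteq> 0"
  then have "f (\<sigma>, - t) \<noteq> 0" by (simp add: qstar_def)
  with assms have "valid_key n (\<sigma>, - t)" by (simp add: Alg_def)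
  then show "valid_key n (\<sigma>, t)" by (simp add: valid_key_def)
qed

lemma Alg_qmult:
  assumes "f \<in> Alg n" "g \<in> Alg n"
  shows "qmult n \<theta> f g \<in> Alg n"
proof (rule AlgI)
  have "{k. qmult n \<theta> f g k \<noteq> 0} \<subseteq>
          (\<lambda>((\<sigma>, r), (\<tau>, s)). (\<sigma>, r + s)) ` ({k. f k \<noteq> 0} \<times> {k. g k \<noteq> 0})"
  proof
    fix k assume "k \<in> {k. qmult n \<theta> f g k \<noteq> 0}"
    moreover obtain \<sigma> t where k: "k = (\<sigma>, t)" by (cases k)
    ultimately obtain r where "f (\<sigma>, r) \<noteq> 0" "g (\<sigma>, t - r) \<noteq> 0"
      by (auto elim: qmult_nonzeroE)
    then show "k \<in> (\<lambda>((\<sigma>, r), (\<tau>, s)). (\<sigma>, r + s)) ` ({k. f k \<noteq> 0} \<times> {k. g k \<noteq> 0})"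
      by (auto simp: k intro!: image_eqI[where x = "((\<sigma>, r), (\<sigma>, t - r))"])
  qed
  then show "finite {k. qmult n \<theta> f g k \<noteq> 0}"
    by (rule finite_subset) (use assms in \<open>simp add: Alg_def\<close>)
next
  fix \<sigma> t assume "qmult n \<theta> f g (\<sigma>, t) \<noteq> 0"
  then obtain r where "f (\<sigma>, r) \<noteq> 0" "g (\<sigma>, t - r) \<noteq> 0"
    by (rule qmult_nonzeroE)
  with assms have "valid_key n (\<sigma>, r)" "valid_key n (\<sigma>, t - r)"
    by (simp_all add: Alg_def)
  then show "valid_key n (\<sigma>, t)" by (simp add: valid_key_def)
qed

lemma psum_in_Alg: "\<sigma> permutes {..<n} \<Longrightarrow> psum \<sigma> \<in> Alg n"
  by (rule Alg_supportI[where T = "{0}"]) (auto simp: psum_apply split: if_splits)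

lemma uent_in_Alg: "i < n \<Longrightarrow> uent n i k \<in> Alg n"
  by (rule Alg_supportI[where T = "{unit_vec i}"]) (auto simp: uent_apply unit_vec_def split: if_splits)

lemma uproj_in_Alg: "uproj n \<theta> i k \<in> Alg n"
  by (rule Alg_supportI[where T = "{0}"]) (auto simp: uproj_apply split: if_splits)

definition uproj_prod :: "nat \<Rightarrow> (nat \<Rightarrow> nat \<Rightarrow> real) \<Rightarrow> (nat \<Rightarrow> nat) \<Rightarrow> nat list \<Rightarrow> qel" where
  "uproj_prod n \<theta> \<sigma> ks = foldr (\<lambda>k acc. qmult n \<theta> (uproj n \<theta> (\<sigma> k) k) acc) ks (qone n)"

lemma uproj_prod_apply:
  "uproj_prod n \<theta> \<sigma> ks (\<sigma>', t) =
    (if \<sigma>' permutes {..<n} \<and> t = 0 \<and> (\<forall>k\<in>set ks. \<sigma>' k = \<sigma> k) then 1 else 0)"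
proof (induction ks arbitrary: t)
  case Nil
  then show ?case by (simp add: uproj_prod_def qone_apply zero_fun_def)
next
  case (Cons a ks)
  have "uproj_prod n \<theta> \<sigma> (a # ks) (\<sigma>', t) =
          uproj n \<theta> (\<sigma> a) a (\<sigma>', 0) * uproj_prod n \<theta> \<sigma> ks (\<sigma>', t)"
    unfolding uproj_prod_def foldr_Cons o_def
    by (rule qmult_degree0_left) (simp add: uproj_apply split: if_splits)
  with Cons show ?case by (auto simp: uproj_apply)
qed

lemma uproj_prod_in_Alg: "uproj_prod n \<theta> \<sigma> ks \<in> Alg n"
  by (rule Alg_supportI[where T = "{0}"]) (auto simp: uproj_prod_apply split: if_splits)

lemma uproj_prod_eq_psum:
  assumes "\<sigma> permutes {..<n}"
  shows "uproj_prod n \<theta> \<sigma> [0..<n] = psum \<sigma>"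
proof
  fix k :: qkey
  obtain \<sigma>' t where k: "k = (\<sigma>', t)" by (cases k)
  show "uproj_prod n \<theta> \<sigma> [0..<n] k = psum \<sigma> k"
    using assms permutes_lessThan_eqI[of \<sigma>' n \<sigma>] by (auto simp: k uproj_prod_apply psum_apply)
qed

subsection \<open>Degree of the left leg\<close>

definition left_degree :: "(nat \<Rightarrow> int) \<Rightarrow> qel2 \<Rightarrow> bool" where
  "left_degree d F \<longleftrightarrow> (\<forall>\<sigma> t l. F ((\<sigma>, t), l) \<noteq> 0 \<longrightarrow> t = d)"

lemma left_degree_qmult2:
  assumes "left_degree d F" "left_degree e G"
  shows "left_degree (d + e) (qmult2 n \<theta> F G)"
  unfolding left_degree_def
proof (intro allI impI)
  fix \<sigma> t l
  assume nz: "qmult2 n \<theta> F G ((\<sigma>, t), l) \<noteq> 0"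
  obtain \<tau> u where l: "l = (\<tau>, u)" by (cases l)
  from nz obtain r s where "F ((\<sigma>, r), (\<tau>, s)) \<noteq> 0" "G ((\<sigma>, t - r), (\<tau>, u - s)) \<noteq> 0"
    unfolding l by (rule qmult2_nonzeroE)
  with assms have "r = d" "t - r = e"
    unfolding left_degree_def by blast+
  then show "t = d + e" by (simp add: algebra_simps)
qed

lemma left_degree_qstar2:
  assumes "left_degree d F"
  shows "left_degree (- d) (qstar2 n \<theta> F)"
  unfolding left_degree_def
proof (intro allI impI)
  fix \<sigma> t l
  assume nz: "qstar2 n \<theta> F ((\<sigma>, t), l) \<noteq> 0"
  obtain \<tau> u where l: "l = (\<tau>, u)" by (cases l)
  from nz have "F ((\<sigma>, - t), (\<tau>, - u)) \<noteq> 0"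
    by (simp add: l qstar2_def)
  with assms have "- t = d"
    unfolding left_degree_def by blast
  then show "t = - d" by (simp add: minus_equation_iff)
qed

subsection \<open>The comultiplication on the generators\<close>

locale comultiplication =
  fixes n :: nat and \<theta> :: "nat \<Rightarrow> nat \<Rightarrow> real" and \<Delta> :: "qel \<Rightarrow> qel2"
  assumes comult: "is_comult n \<theta> \<Delta>"
begin

lemma Delta_qmult: "a \<in> Alg n \<Longrightarrow> b \<in> Alg n \<Longrightarrow> \<Delta> (qmult n \<theta> a b) = qmult2 n \<theta> (\<Delta> a) (\<Delta> b)"
  using comult by (simp add: is_comult_def)

lemma Delta_qstar: "a \<in> Alg n \<Longrightarrow> \<Delta> (qstar n \<theta> a) = qstar2 n \<theta> (\<Delta> a)"
  using comult by (simp add: is_comult_def)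

lemma Delta_qone: "\<Delta> (qone n) = qone2 n"
  using comult by (simp add: is_comult_def)

lemma Delta_uent_apply:
  assumes "i < n" "k < n"
  shows "\<Delta> (uent n i k) ((\<sigma>, t), (\<tau>, u)) =
    (if \<sigma> permutes {..<n} \<and> \<tau> permutes {..<n} \<and> \<sigma> (\<tau> k) = i \<and> t = unit_vec i \<and> u = unit_vec (\<tau> k)
     then 1 else 0)"
proof -
  have "\<Delta> (uent n i k) ((\<sigma>, t), (\<tau>, u)) =
          (\<Sum>j<n. qtensor (uent n i j) (uent n j k) ((\<sigma>, t), (\<tau>, u)))"
    using comult assms by (simp add: is_comult_def sum_apply)
  also have "\<dots> = (\<Sum>j<n. if j = \<tau> k then
      (if \<sigma> permutes {..<n} \<and> \<tau> permutes {..<n} \<and> \<sigma> (\<tau> k) = i \<and> t = unit_vec i \<and> u = unit_vec (\<tau> k)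
       then 1 else 0) else 0)"
    by (intro sum.cong) (auto simp: qtensor_def uent_apply)
  also have "\<dots> = (if \<sigma> permutes {..<n} \<and> \<tau> permutes {..<n} \<and> \<sigma> (\<tau> k) = i \<and> t = unit_vec i
      \<and> u = unit_vec (\<tau> k) then 1 else 0)"
    using assms permutes_in_image[of \<tau> "{..<n}" k] by auto
  finally show ?thesis .
qed

lemma Delta_qstar_uent_apply:
  assumes "i < n" "k < n"
  shows "\<Delta> (qstar n \<theta> (uent n i k)) ((\<sigma>, t), (\<tau>, u)) =
    (if \<sigma> permutes {..<n} \<and> \<tau> permutes {..<n} \<and> \<sigma> (\<tau> k) = i \<and> t = - unit_vec i \<and> u = - unit_vec (\<tau> k)
     then 1 else 0)"
  using assms
  by (auto simp: Delta_qstar uent_in_Alg qstar2_def Delta_uent_apply minus_equation_iff[of t]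
      minus_equation_iff[of u])

lemma Delta_uproj_apply:
  assumes "i < n" "k < n"
  shows "\<Delta> (uproj n \<theta> i k) ((\<sigma>, t), (\<tau>, u)) =
    (if \<sigma> permutes {..<n} \<and> \<tau> permutes {..<n} \<and> \<sigma> (\<tau> k) = i \<and> t = 0 \<and> u = 0 then 1 else 0)"
proof -
  have "\<Delta> (uproj n \<theta> i k) = qmult2 n \<theta> (\<Delta> (qstar n \<theta> (uent n i k))) (\<Delta> (uent n i k))"
    unfolding uproj_def using assms by (simp add: Delta_qmult uent_in_Alg Alg_qstar)
  moreover have "\<And>r s. \<Delta> (qstar n \<theta> (uent n i k)) ((\<sigma>, r), (\<tau>, s)) \<noteq> 0 \<longleftrightarrow>
      (\<sigma> permutes {..<n} \<and> \<tau> permutes {..<n} \<and> \<sigma> (\<tau> k) = i) \<and> r = - unit_vec i \<and> s = - unit_vec (\<tau> k)"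
    using assms by (simp add: Delta_qstar_uent_apply)
  note qmult2_single_left[OF this, of n \<theta> "\<Delta> (uent n i k)" t u]
  ultimately show ?thesis
    using assms by (auto simp: Delta_qstar_uent_apply Delta_uent_apply)
qed

lemma Delta_uproj_prod_apply:
  assumes "\<sigma> permutes {..<n}" "set ks \<subseteq> {..<n}"
  shows "\<Delta> (uproj_prod n \<theta> \<sigma> ks) ((\<sigma>', t), (\<tau>, u)) =
    (if \<sigma>' permutes {..<n} \<and> \<tau> permutes {..<n} \<and> t = 0 \<and> u = 0 \<and> (\<forall>k\<in>set ks. \<sigma>' (\<tau> k) = \<sigma> k)
     then 1 else 0)"
  using assms(2)
proof (induction ks arbitrary: t u)
  case Nil
  then show ?case by (simp add: uproj_prod_def Delta_qone qone2_def qtensor_def qone_apply zero_fun_def)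
next
  case (Cons a ks)
  then have a: "a < n" "\<sigma> a < n"
    using permutes_in_image[OF assms(1)] by auto
  have "\<Delta> (uproj_prod n \<theta> \<sigma> (a # ks)) =
          qmult2 n \<theta> (\<Delta> (uproj n \<theta> (\<sigma> a) a)) (\<Delta> (uproj_prod n \<theta> \<sigma> ks))"
    unfolding uproj_prod_def foldr_Cons o_def
    by (rule Delta_qmult[OF uproj_in_Alg uproj_prod_in_Alg[unfolded uproj_prod_def]])
  moreover have "qmult2 n \<theta> (\<Delta> (uproj n \<theta> (\<sigma> a) a)) (\<Delta> (uproj_prod n \<theta> \<sigma> ks)) ((\<sigma>', t), (\<tau>, u)) =
      \<Delta> (uproj n \<theta> (\<sigma> a) a) ((\<sigma>', 0), (\<tau>, 0)) * \<Delta> (uproj_prod n \<theta> \<sigma> ks) ((\<sigma>', t), (\<tau>, u))"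
    by (rule qmult2_degree0_left) (simp add: Delta_uproj_apply a split: if_splits)
  ultimately show ?case
    using Cons by (auto simp: Delta_uproj_apply a)
qed

lemma Delta_psum_apply:
  assumes "\<sigma> permutes {..<n}"
  shows "\<Delta> (psum \<sigma>) ((\<sigma>', t), (\<tau>, u)) =
    (if \<sigma>' permutes {..<n} \<and> \<tau> permutes {..<n} \<and> t = 0 \<and> u = 0 \<and> \<sigma>' \<circ> \<tau> = \<sigma> then 1 else 0)"
proof -
  have "(\<forall>k<n. \<sigma>' (\<tau> k) = \<sigma> k) \<longleftrightarrow> \<sigma>' \<circ> \<tau> = \<sigma>"
    if "\<sigma>' permutes {..<n}" "\<tau> permutes {..<n}"
    using permutes_lessThan_eqI[OF permutes_compose[OF that(2,1)] assms] by auto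
  then show ?thesis
    using Delta_uproj_prod_apply[OF assms, of "[0..<n]"] uproj_prod_eq_psum[OF assms, of \<theta>]
    by (auto simp: atLeast0LessThan)
qed

definition graded :: "(nat \<Rightarrow> int) \<Rightarrow> qel \<Rightarrow> bool" where
  "graded d a \<longleftrightarrow> a \<in> Alg n \<and> left_degree d (\<Delta> a)"

lemma graded_qmult: "graded d a \<Longrightarrow> graded e b \<Longrightarrow> graded (d + e) (qmult n \<theta> a b)"
  unfolding graded_def by (simp add: Alg_qmult Delta_qmult left_degree_qmult2)

lemma graded_qstar: "graded d a \<Longrightarrow> graded (- d) (qstar n \<theta> a)"
  unfolding graded_def by (simp add: Alg_qstar Delta_qstar left_degree_qstar2)

lemma graded_psum: "\<sigma> permutes {..<n} \<Longrightarrow> graded 0 (psum \<sigma>)"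
  unfolding graded_def left_degree_def by (simp add: psum_in_Alg Delta_psum_apply split: if_splits)

lemma graded_uent: "i < n \<Longrightarrow> k < n \<Longrightarrow> graded (unit_vec i) (uent n i k)"
  unfolding graded_def left_degree_def by (simp add: uent_in_Alg Delta_uent_apply split: if_splits)

lemma graded_gen:
  assumes "\<sigma> permutes {..<n}" "i < n"
  shows "graded (unit_vec i) (gen \<sigma> i)"
proof -
  have "inv \<sigma> i < n"
    using permutes_in_image[OF permutes_inv[OF assms(1)], of i] assms(2) by simp
  then have "graded (0 + unit_vec i) (qmult n \<theta> (psum \<sigma>) (uent n i (inv \<sigma> i)))"
    using graded_qmult graded_psum[OF assms(1)] graded_uent assms(2) by blast
  then show ?thesis
    using gen_eq_qmult_psum_uent[OF assms(1)] by simp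
qed

lemma graded_qmult_iterate:
  assumes "graded d a" "graded e b"
  shows "graded (\<lambda>j. int m * d j + e j) ((qmult n \<theta> a ^^ m) b)"
proof (induction m)
  case 0
  then show ?case using assms(2) by simp
next
  case (Suc m)
  then have "graded (d + (\<lambda>j. int m * d j + e j)) ((qmult n \<theta> a ^^ Suc m) b)"
    using graded_qmult[OF assms(1)] by simp
  moreover have "d + (\<lambda>j. int m * d j + e j) = (\<lambda>j. int (Suc m) * d j + e j)"
    by (auto simp: fun_eq_iff algebra_simps)
  ultimately show ?case by simp
qed

lemma graded_gpow:
  assumes "\<sigma> permutes {..<n}" "i < n"
  shows "graded (\<lambda>j. if j = i then k else 0) (gpow n \<theta> \<sigma> i k)"
proof (cases "0 \<le> k")
  case True
  have "graded (\<lambda>j. int (nat k) * unit_vec i j + 0 j) ((qmult n \<theta> (gen \<sigma> i) ^^ nat k) (psum \<sigma>))"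
    using graded_qmult_iterate[OF graded_gen[OF assms] graded_psum[OF assms(1)]] .
  moreover have "(\<lambda>j. int (nat k) * unit_vec i j + 0 j) = (\<lambda>j. if j = i then k else 0)"
    using True by (auto simp: unit_vec_def)
  ultimately show ?thesis
    using True by (simp add: gpow_def)
next
  case False
  have "graded (\<lambda>j. int (nat (- k)) * (- unit_vec i) j + 0 j)
          ((qmult n \<theta> (qstar n \<theta> (gen \<sigma> i)) ^^ nat (- k)) (psum \<sigma>))"
    using graded_qmult_iterate[OF graded_qstar[OF graded_gen[OF assms]] graded_psum[OF assms(1)]] .
  moreover have "(\<lambda>j. int (nat (- k)) * (- unit_vec i) j + 0 j) = (\<lambda>j. if j = i then k else 0)"
    using False by (auto simp: unit_vec_def)
  ultimately show ?thesis
    using False by (simp add: gpow_def)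
qed

lemma graded_gpow_foldr:
  assumes "\<sigma> permutes {..<n}" "distinct js" "set js \<subseteq> {..<n}"
  shows "graded (\<lambda>j. if j \<in> set js then r j else 0)
           (foldr (\<lambda>i acc. qmult n \<theta> (gpow n \<theta> \<sigma> i (r i)) acc) js (psum \<sigma>))"
  using assms(2,3)
proof (induction js)
  case Nil
  then show ?case using graded_psum[OF assms(1)] by (simp add: zero_fun_def)
next
  case (Cons a js)
  then have "graded ((\<lambda>j. if j = a then r a else 0) + (\<lambda>j. if j \<in> set js then r j else 0))
      (foldr (\<lambda>i acc. qmult n \<theta> (gpow n \<theta> \<sigma> i (r i)) acc) (a # js) (psum \<sigma>))"
    using graded_qmult graded_gpow[OF assms(1)] by simp
  moreover have "(\<lambda>j. if j = a then r a else 0) + (\<lambda>j. if j \<in> set js then r j else 0) =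
      (\<lambda>j. if j \<in> set (a # js) then r j else 0)"
    using Cons.prems by (auto simp: fun_eq_iff)
  ultimately show ?case by simp
qed

lemma graded_xpow:
  assumes "\<sigma> permutes {..<n}" "\<forall>i\<ge>n. r i = 0"
  shows "graded r (xpow n \<theta> \<sigma> r)"
proof -
  have "(\<lambda>j. if j \<in> set [0..<n] then r j else 0) = r"
    using assms(2) by (auto simp: fun_eq_iff)
  then show ?thesis
    using graded_gpow_foldr[OF assms(1), of "[0..<n]" r] by (simp add: xpow_def atLeast0LessThan)
qed

end

subsection \<open>The Haar state\<close>

locale haar_state = comultiplication +
  fixes h :: "qel \<Rightarrow> complex"
  assumes haar: "is_haar_state n \<theta> \<Delta> h"
begin

lemma h_add: "a \<in> Alg n \<Longrightarrow> b \<in> Alg n \<Longrightarrow> h (a + b) = h a + h b"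
  using haar by (simp add: is_haar_state_def is_state_def)

lemma h_qone: "h (qone n) = 1"
  using haar by (simp add: is_haar_state_def is_state_def)

lemma h_zero: "h 0 = 0"
  using h_add[OF Alg_zero Alg_zero] by simp

lemma h_sum: "finite A \<Longrightarrow> (\<And>x. x \<in> A \<Longrightarrow> f x \<in> Alg n) \<Longrightarrow> h (\<Sum>x\<in>A. f x) = (\<Sum>x\<in>A. h (f x))"
  by (induction A rule: finite_induct) (simp_all add: h_zero h_add Alg_sum)

lemma h_slice_Delta:
  assumes "a \<in> Alg n" "\<rho> permutes {..<n}"
  shows "h (\<lambda>l. \<Delta> a ((\<rho>, 0), l)) = h a"
proof -
  have "slice_right h (\<Delta> a) = qscale (h a) (qone n)"
    using haar assms(1) by (simp add: is_haar_state_def)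
  from fun_cong[OF this, of "(\<rho>, 0)"] show ?thesis
    using assms(2) by (simp add: slice_right_def qscale_def qone_apply)
qed

lemma h_graded_eq_0:
  assumes "graded d a" "d \<noteq> 0"
  shows "h a = 0"
proof -
  have "\<Delta> a ((id, 0), l) = 0" for l
    using assms unfolding graded_def left_degree_def by blast
  then have "(\<lambda>l. \<Delta> a ((id, 0), l)) = 0"
    by (simp add: zero_fun_def)
  with h_slice_Delta[of a id] assms(1) show ?thesis
    by (simp add: graded_def h_zero)
qed

lemma slice_Delta_psum:
  assumes "\<sigma> permutes {..<n}" "\<rho> permutes {..<n}"
  shows "(\<lambda>l. \<Delta> (psum \<sigma>) ((\<sigma> \<circ> inv \<rho>, 0), l)) = psum \<rho>"
proof
  fix l :: qkey
  obtain \<tau> u where l: "l = (\<tau>, u)" by (cases l)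
  have "\<sigma> \<circ> inv \<rho> \<circ> \<tau> = \<sigma> \<longleftrightarrow> \<tau> = \<rho>"
    using permutes_inj[OF assms(1)] by (auto simp: fun_eq_iff inj_eq permutes_inv_eq[OF assms(2)])
  moreover have "\<sigma> \<circ> inv \<rho> permutes {..<n}"
    using assms by (simp add: permutes_compose permutes_inv)
  ultimately show "\<Delta> (psum \<sigma>) ((\<sigma> \<circ> inv \<rho>, 0), l) = psum \<rho> l"
    using assms by (auto simp: l Delta_psum_apply psum_apply)
qed

lemma h_psum_eq:
  assumes "\<sigma> permutes {..<n}" "\<rho> permutes {..<n}"
  shows "h (psum \<rho>) = h (psum \<sigma>)"
  using h_slice_Delta[OF psum_in_Alg[OF assms(1)], of "\<sigma> \<circ> inv \<rho>"] slice_Delta_psum[OF assms]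
  using assms by (simp add: permutes_compose permutes_inv)

lemma h_psum:
  assumes "\<sigma> permutes {..<n}"
  shows "h (psum \<sigma>) = 1 / fact n"
proof -
  let ?S = "{\<sigma>. \<sigma> permutes {..<n}}"
  have "1 = h (\<Sum>\<rho>\<in>?S. psum \<rho>)"
    using h_qone qone_eq_sum_psum by simp
  also have "\<dots> = (\<Sum>\<rho>\<in>?S. h (psum \<rho>))"
    by (rule h_sum) (simp_all add: finite_permutations psum_in_Alg)
  also have "\<dots> = (\<Sum>\<rho>\<in>?S. h (psum \<sigma>))"
    by (rule sum.cong) (simp_all add: h_psum_eq[OF assms])
  also have "\<dots> = fact n * h (psum \<sigma>)"
    by (simp add: card_permutations)
  finally show ?thesis
    by (simp add: field_simps)
qed

end

lemma xpow_zero: "xpow n \<theta> \<sigma> (\<lambda>_. 0) = psum \<sigma>"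
proof -
  have "qmult n \<theta> (psum \<sigma>) (psum \<sigma>) = psum \<sigma>"
  proof
    fix k :: qkey
    obtain \<sigma>' t where k: "k = (\<sigma>', t)" by (cases k)
    show "qmult n \<theta> (psum \<sigma>) (psum \<sigma>) k = psum \<sigma> k"
      unfolding k by (subst qmult_degree0_left) (auto simp: psum_apply split: if_splits)
  qed
  then have "foldr (\<lambda>i. qmult n \<theta> (psum \<sigma>)) js (psum \<sigma>) = psum \<sigma>" for js :: "nat list"
    by (induction js) simp_all
  then show ?thesis
    by (simp add: xpow_def gpow_def)
qed

theorem proposition4p3:
  fixes n :: nat and \<theta> :: "nat \<Rightarrow> nat \<Rightarrow> real"
    and \<Delta> :: "qel \<Rightarrow> qel2" and h :: "qel \<Rightarrow> complex"
    and \<sigma> :: "nat \<Rightarrow> nat" and r :: "nat \<Rightarrow> int"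
  assumes "n \<ge> 2"
    and "\<forall>i<n. \<forall>j<n. \<theta> i j = - \<theta> j i"
    and "is_comult n \<theta> \<Delta>"
    and "is_haar_state n \<theta> \<Delta> h"
    and "\<sigma> permutes {..<n}"
    and "\<forall>i\<ge>n. r i = 0"
  shows "h (xpow n \<theta> \<sigma> r) = (if r = (\<lambda>_. 0) then 1 / fact n else 0)"
proof -
  interpret haar_state n \<theta> \<Delta> h
    using assms(3,4) by (simp add: haar_state_def haar_state_axioms_def comultiplication_def)
  show ?thesis
  proof (cases "r = (\<lambda>_. 0)")
    case True
    then show ?thesis
      using h_psum[OF assms(5)] by (simp add: xpow_zero)
  next
    case False
    then show ?thesis
      using h_graded_eq_0[OF graded_xpow[OF assms(5,6)]] by (simp add: zero_fun_def)
  qed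
qed

end
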